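(* Let $g_N\in H_N^{\mathrm{rw}}$ converge strongly to $g\in H^{\mathrm{bm}}$ with respect to the Hilbert space convergence $H_N^{\mathrm{rw}}\to H^{\mathrm{bm}}$. Define $\hat g_N=g_N-g_N(0)\mathbf 1_{\{0\}}$ (viewed as an element of $H_N^{\mathrm{sip}}$) and $\hat g=g-g(0)\mathbf 1_{\{0\}}$, i.e. the element of $H^{\mathrm{sbm}}$ that equals $g$ Lebesgue-a.e. and vanishes at $0$. Then $\hat g_N$ converges strongly to $\hat g$ with respect to the Hilbert space convergence $H_N^{\mathrm{sip}}\to H^{\mathrm{sbm}}$.
   Context: $\gamma>0$; $\mu_N$ gives mass $\frac1N$ to each point of $\frac1N\mathbb Z$; $\nu_{\gamma,N}=\mu_N+\sqrt2\gamma\delta_0$. $H_N^{\mathrm{rw}}=L^2(\frac1N\mathbb Z,\mu_N)$, $H^{\mathrm{bm}}=L^2(\mathbb R,dx)$, with Hilbert convergence witnessed by $C^{\mathrm{rw}}=C_c^\infty(\mathbb R)$ and $\Phi_Nf=f|_{\frac1N\mathbb Z}$. $H_N^{\mathrm{sip}}=L^2(\frac1N\mathbb Z,\nu_{\gamma,N})$, $H^{\mathrm{sbm}}=L^2(\mathbb R,dx+\sqrt2\gamma\delta_0)$, with Hilbert convergence witnessed by $C^{\mathrm{sip}}=\{f+\lambda\mathbf 1_{\{0\}}:f\in C_c^\infty(\mathbb R),\lambda\in\mathbb R\}$ and $\Phi_Nf=f|_{\frac1N\mathbb Z}$. In either setting, $f_N\in H_N$ converges strongly to $f\in H$ if there exist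 $\tilde f_M$ in the respective dense set $C$ with $\|\tilde f_M-f\|_H\to0$ and $\lim_{M\to\infty}\limsup_{N\to\infty}\|\Phi_N\tilde f_M-f_N\|_{H_N}=0$. *)

theory Defs
  imports "HOL-Analysis.Analysis"
begin

text \<open>Elements of H_N on the grid (1/N)Z are represented as h :: int \<Rightarrow> real,
  with h k the value at the point k/N.  Elements of L^2 spaces on the real line are
  represented as functions real \<Rightarrow> real (norms only see a.e./measure-relevant values).\<close>

definition l2_grid :: "(int \<Rightarrow> real) \<Rightarrow> bool" where
  "l2_grid h \<longleftrightarrow> (\<lambda>k. (h k)^2) summable_on UNIV"

definition L2_line :: "(real \<Rightarrow> real) \<Rightarrow> bool" where
  "L2_line f \<longleftrightarrow> f \<in> borel_measurable lebesgue \<and> integrable lebesgue (\<lambda>x. (f x)^2)"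

definition rw_norm :: "nat \<Rightarrow> (int \<Rightarrow> real) \<Rightarrow> real" where
  "rw_norm N h = sqrt ((1 / real N) * (\<Sum>\<^sub>\<infinity>k. (h k)^2))"

definition sip_norm :: "real \<Rightarrow> nat \<Rightarrow> (int \<Rightarrow> real) \<Rightarrow> real" where
  "sip_norm \<gamma> N h = sqrt ((1 / real N) * (\<Sum>\<^sub>\<infinity>k. (h k)^2) + sqrt 2 * \<gamma> * (h 0)^2)"

definition bm_norm :: "(real \<Rightarrow> real) \<Rightarrow> real" where
  "bm_norm f = sqrt (integral\<^sup>L lebesgue (\<lambda>x. (f x)^2))"

definition sbm_norm :: "real \<Rightarrow> (real \<Rightarrow> real) \<Rightarrow> real" where
  "sbm_norm \<gamma> f = sqrt (integral\<^sup>L lebesgue (\<lambda>x. (f x)^2) + sqrt 2 * \<gamma> * (f 0)^2)"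

definition Cc_inf :: "(real \<Rightarrow> real) set" where
  "Cc_inf = {f. (\<forall>n x. (deriv ^^ n) f differentiable (at x)) \<and> compact (closure {x. f x \<noteq> 0})}"

definition C_sip :: "(real \<Rightarrow> real) set" where
  "C_sip = {\<lambda>x. f x + (if x = 0 then c else 0) | f c. f \<in> Cc_inf}"

definition Phi :: "nat \<Rightarrow> (real \<Rightarrow> real) \<Rightarrow> int \<Rightarrow> real" where
  "Phi N f = (\<lambda>k. f (real_of_int k / real N))"

definition strong_conv ::
  "(nat \<Rightarrow> (int \<Rightarrow> real) \<Rightarrow> real) \<Rightarrow> ((real \<Rightarrow> real) \<Rightarrow> real) \<Rightarrow> (real \<Rightarrow> real) set
     \<Rightarrow> (nat \<Rightarrow> int \<Rightarrow> real) \<Rightarrow> (real \<Rightarrow> real) \<Rightarrow> bool" where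
  "strong_conv normN normH C fN f \<longleftrightarrow>
     (\<exists>ft :: nat \<Rightarrow> real \<Rightarrow> real. (\<forall>M. ft M \<in> C) \<and>
        (\<lambda>M. normH (ft M - f)) \<longlonglongrightarrow> 0 \<and>
        (\<lambda>M. limsup (\<lambda>N. ereal (normN N (Phi N (ft M) - fN N)))) \<longlonglongrightarrow> 0)"

definition rw_bm_conv :: "(nat \<Rightarrow> int \<Rightarrow> real) \<Rightarrow> (real \<Rightarrow> real) \<Rightarrow> bool" where
  "rw_bm_conv fN f \<longleftrightarrow> (\<forall>N. l2_grid (fN N)) \<and> L2_line f \<and>
     strong_conv rw_norm bm_norm Cc_inf fN f"

definition sip_sbm_conv :: "real \<Rightarrow> (nat \<Rightarrow> int \<Rightarrow> real) \<Rightarrow> (real \<Rightarrow> real) \<Rightarrow> bool" where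
  "sip_sbm_conv \<gamma> fN f \<longleftrightarrow> (\<forall>N. l2_grid (fN N)) \<and> L2_line f \<and>
     strong_conv (sip_norm \<gamma>) (sbm_norm \<gamma>) C_sip fN f"

end

theory Submission
  imports Defs
begin

text \<open>If \<phi>_M \<in> C_c^\<infinity> approximate g, then \<phi>_M - \<phi>_M(0) 1_{0} \<in> C^sip approximate \<hat>g.
  On the line, \<phi>_M - \<phi>_M(0) 1_{0} - \<hat>g vanishes at the atom 0 and equals \<phi>_M - g almost
  everywhere, so its sbm-norm is the bm-norm of \<phi>_M - g.  On the grid,
  \<Phi>_N(\<phi>_M - \<phi>_M(0) 1_{0}) - \<hat>g_N is \<Phi>_N \<phi>_M - g_N with its value at 0 replaced by 0;
  the atom of \<nu>_{\<gamma>,N} does not see it, so its sip-norm is at most the rw-norm of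
  \<Phi>_N \<phi>_M - g_N.\<close>

lemma strong_conv_transfer:
  assumes conv: "strong_conv normN normH C fN f"
    and maps_into: "\<And>c. c \<in> C \<Longrightarrow> T c \<in> C'"
    and limit_norm: "\<And>c. c \<in> C \<Longrightarrow> normH' (T c - f') = normH (c - f)"
    and grid_norm_le: "\<And>c. c \<in> C \<Longrightarrow>
      eventually (\<lambda>N. normN' N (Phi N (T c) - fN' N) \<le> normN N (Phi N c - fN N)) sequentially"
    and grid_norm_nonneg: "\<And>N h. 0 \<le> normN' N h"
  shows "strong_conv normN' normH' C' fN' f'"
proof -
  from conv obtain ft where ftC: "\<And>M. ft M \<in> C"
    and lim: "(\<lambda>M. normH (ft M - f)) \<longlonglongrightarrow> 0"
    and grid: "(\<lambda>M. limsup (\<lambda>N. ereal (normN N (Phi N (ft M) - fN N)))) \<longlonglongrightarrow> 0"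
    unfolding strong_conv_def by blast
  have upper: "limsup (\<lambda>N. ereal (normN' N (Phi N (T (ft M)) - fN' N)))
      \<le> limsup (\<lambda>N. ereal (normN N (Phi N (ft M) - fN N)))" for M
    using grid_norm_le[OF ftC] by (intro Limsup_mono) (auto elim: eventually_mono)
  have lower: "0 \<le> limsup (\<lambda>N. ereal (normN' N (Phi N (T (ft M)) - fN' N)))" for M
    by (intro le_Limsup always_eventually) (simp_all add: grid_norm_nonneg)
  have "(\<lambda>M. limsup (\<lambda>N. ereal (normN' N (Phi N (T (ft M)) - fN' N)))) \<longlonglongrightarrow> 0"
    using upper lower by (intro tendsto_sandwich[OF _ _ tendsto_const grid]) auto
  then show ?thesis
    unfolding strong_conv_def using ftC lim
    by (intro exI[of _ "\<lambda>M. T (ft M)"]) (simp add: maps_into limit_norm)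
qed

lemma borel_measurable_lebesgue_fun_upd:
  fixes f :: "real \<Rightarrow> real"
  assumes "f \<in> borel_measurable lebesgue"
  shows "f(a := c) \<in> borel_measurable lebesgue"
proof -
  have "{x \<in> space lebesgue. x = a} \<in> sets lebesgue"
    by (simp add: sets_completionI_sets)
  with assms show ?thesis
    unfolding fun_upd_def by (intro measurable_If) auto
qed

lemma AE_lebesgue_neq: "AE x in lebesgue. x \<noteq> (a::real)"
  by (simp add: AE_completion AE_lborel_singleton)

lemma integral_lebesgue_square_fun_upd:
  fixes f :: "real \<Rightarrow> real"
  assumes "f \<in> borel_measurable lebesgue"
  shows "integral\<^sup>L lebesgue (\<lambda>x. ((f(a := c)) x)^2) = integral\<^sup>L lebesgue (\<lambda>x. (f x)^2)"
proof (rule integral_cong_AE)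
  show "(\<lambda>x. ((f(a := c)) x)^2) \<in> borel_measurable lebesgue"
    using borel_measurable_lebesgue_fun_upd[OF assms] by measurable
  show "(\<lambda>x. (f x)^2) \<in> borel_measurable lebesgue"
    using assms by measurable
  show "AE x in lebesgue. ((f(a := c)) x)^2 = (f x)^2"
    using AE_lebesgue_neq[of a] by eventually_elim simp
qed

lemma L2_line_fun_upd:
  assumes "L2_line f"
  shows "L2_line (f(a := c))"
proof -
  have meas: "f \<in> borel_measurable lebesgue" and int: "integrable lebesgue (\<lambda>x. (f x)^2)"
    using assms unfolding L2_line_def by auto
  have meas_upd: "f(a := c) \<in> borel_measurable lebesgue"
    using meas by (rule borel_measurable_lebesgue_fun_upd)
  have "integrable lebesgue (\<lambda>x. ((f(a := c)) x)^2)"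
  proof (rule integrable_cong_AE_imp[OF int])
    show "(\<lambda>x. ((f(a := c)) x)^2) \<in> borel_measurable lebesgue"
      using meas_upd by measurable
    show "AE x in lebesgue. (f x)^2 = ((f(a := c)) x)^2"
      using AE_lebesgue_neq[of a] by eventually_elim simp
  qed
  with meas_upd show ?thesis
    unfolding L2_line_def by simp
qed

lemma sbm_norm_fun_upd_zero_diff:
  assumes "f \<in> borel_measurable lebesgue" "h \<in> borel_measurable lebesgue"
  shows "sbm_norm \<gamma> (f(0 := 0) - h(0 := 0)) = bm_norm (f - h)"
proof -
  have upd: "f(0 := 0) - h(0 := 0) = (f - h)(0 := 0)"
    by auto
  have "f - h \<in> borel_measurable lebesgue"
    using assms unfolding fun_diff_def by (rule borel_measurable_diff)
  then have integral_eq: "integral\<^sup>L lebesgue (\<lambda>x. ((f(0 := 0) - h(0 := 0)) x)^2)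
      = integral\<^sup>L lebesgue (\<lambda>x. ((f - h) x)^2)"
    unfolding upd by (rule integral_lebesgue_square_fun_upd)
  show ?thesis
    unfolding sbm_norm_def bm_norm_def integral_eq by simp
qed

lemma Cc_inf_continuous:
  assumes "f \<in> Cc_inf"
  shows "continuous_on UNIV f"
proof -
  have "(deriv ^^ 0) f differentiable (at x)" for x
    using assms unfolding Cc_inf_def by blast
  then show ?thesis
    by (simp add: continuous_at_imp_continuous_on differentiable_imp_continuous_within)
qed

lemma Cc_inf_borel_measurable_lebesgue:
  assumes "f \<in> Cc_inf"
  shows "f \<in> borel_measurable lebesgue"
  using Cc_inf_continuous[OF assms]
  by (simp add: borel_measurable_continuous_onI measurable_completion)

lemma fun_upd_in_C_sip:
  assumes "f \<in> Cc_inf"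
  shows "f(0 := c) \<in> C_sip"
  unfolding C_sip_def using assms
  by (intro CollectI exI[of _ f] exI[of _ "c - f 0"]) (simp add: fun_eq_iff)

lemma finite_grid_points_in_bounded:
  assumes "bounded S" "N > 0"
  shows "finite {k::int. real_of_int k / real N \<in> S}"
proof -
  obtain B where B: "\<And>x. x \<in> S \<Longrightarrow> \<bar>x\<bar> \<le> B"
    using assms(1) bounded_real by blast
  have "k \<in> {-\<lceil>B * real N\<rceil>..\<lceil>B * real N\<rceil>}" if "real_of_int k / real N \<in> S" for k
  proof -
    have "\<bar>real_of_int k\<bar> / real N \<le> B"
      using B[OF that] by (simp add: abs_divide)
    then have "\<bar>real_of_int k\<bar> \<le> B * real N"
      using assms(2) by (simp add: divide_le_eq)
    then show ?thesis
      by simp linarith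
  qed
  then show ?thesis
    by (blast intro: finite_subset[OF _ finite_atLeastAtMost_int])
qed

lemma finite_support_Phi_Cc_inf:
  assumes "f \<in> Cc_inf" "N > 0"
  shows "finite {k. Phi N f k \<noteq> 0}"
proof -
  have "bounded (closure {x. f x \<noteq> 0})"
    using assms(1) unfolding Cc_inf_def by (simp add: compact_imp_bounded)
  from finite_grid_points_in_bounded[OF this assms(2)] show ?thesis
    unfolding Phi_def by (rule finite_subset[rotated]) (auto intro: closure_subset[THEN subsetD])
qed

text \<open>For N = 0 every grid point k / N is 0 (division by zero), so the hypothesis is needed.\<close>

lemma Phi_fun_upd_zero:
  assumes "N > 0"
  shows "Phi N (f(0 := c)) = (Phi N f)(0 := c)"
  using assms by (auto simp: Phi_def fun_eq_iff)

lemma l2_grid_finite_support: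
  assumes "finite {k. h k \<noteq> 0}"
  shows "l2_grid h"
  unfolding l2_grid_def
  using assms by (intro finite_nonzero_values_imp_summable_on) simp

lemma l2_grid_diff:
  assumes "l2_grid a" "l2_grid b"
  shows "l2_grid (a - b)"
proof -
  have "(\<lambda>k. 2 * (a k)^2 + 2 * (b k)^2) summable_on UNIV"
    using assms unfolding l2_grid_def by (intro summable_on_add summable_on_cmult_right)
  then show ?thesis
    unfolding l2_grid_def
  proof (rule summable_on_comparison_test)
    show "((a - b) k)^2 \<le> 2 * (a k)^2 + 2 * (b k)^2" for k
      using zero_le_power2[of "a k + b k"] by (simp add: power2_eq_square algebra_simps)
  qed simp
qed

lemma l2_grid_fun_upd:
  assumes "l2_grid h"
  shows "l2_grid (h(a := c))"
proof -
  have "h(a := c) = h - (\<lambda>k. if k = a then h a - c else 0)"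
    by auto
  moreover have "l2_grid (\<lambda>k. if k = a then h a - c else 0)"
    by (rule l2_grid_finite_support) simp
  ultimately show ?thesis
    using assms by (simp add: l2_grid_diff)
qed

lemma sip_norm_nonneg:
  assumes "\<gamma> \<ge> 0"
  shows "0 \<le> sip_norm \<gamma> N h"
  unfolding sip_norm_def using assms by (simp add: infsum_nonneg)

lemma sip_norm_fun_upd_zero_le:
  assumes "l2_grid h"
  shows "sip_norm \<gamma> N (h(0 := 0)) \<le> rw_norm N h"
proof -
  have "(\<Sum>\<^sub>\<infinity>k. ((h(0 := 0)) k)^2) \<le> (\<Sum>\<^sub>\<infinity>k. (h k)^2)"
    using l2_grid_fun_upd[OF assms] assms unfolding l2_grid_def by (rule infsum_mono) auto
  then show ?thesis
    unfolding sip_norm_def rw_norm_def by (simp add: divide_right_mono)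
qed

lemma sip_norm_Phi_fun_upd_zero_le:
  assumes "f \<in> Cc_inf" "l2_grid h" "N > 0"
  shows "sip_norm \<gamma> N (Phi N (f(0 := 0)) - h(0 := 0)) \<le> rw_norm N (Phi N f - h)"
proof -
  have "l2_grid (Phi N f - h)"
    using l2_grid_finite_support[OF finite_support_Phi_Cc_inf[OF assms(1,3)]] assms(2)
    by (rule l2_grid_diff)
  moreover have "Phi N (f(0 := 0)) - h(0 := 0) = (Phi N f - h)(0 := 0)"
    using assms(3) by (auto simp: Phi_fun_upd_zero)
  ultimately show ?thesis
    by (simp add: sip_norm_fun_upd_zero_le)
qed

theorem proposition5p11:
  fixes \<gamma> :: real and g :: "nat \<Rightarrow> int \<Rightarrow> real" and g_lim :: "real \<Rightarrow> real"
  assumes "\<gamma> > 0"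
    and "rw_bm_conv g g_lim"
  shows "sip_sbm_conv \<gamma> (\<lambda>N k. if k = 0 then 0 else g N k)
           (\<lambda>x. if x = 0 then 0 else g_lim x)"
proof -
  from assms(2) have g_l2: "\<And>N. l2_grid (g N)" and g_lim_L2: "L2_line g_lim"
    and conv: "strong_conv rw_norm bm_norm Cc_inf g g_lim"
    unfolding rw_bm_conv_def by auto
  have "strong_conv (sip_norm \<gamma>) (sbm_norm \<gamma>) C_sip (\<lambda>N. (g N)(0 := 0)) (g_lim(0 := 0))"
  proof (rule strong_conv_transfer[OF conv, where T = "\<lambda>f. f(0 := 0)"])
    fix f assume f: "f \<in> Cc_inf"
    then show "f(0 := 0) \<in> C_sip"
      by (rule fun_upd_in_C_sip)
    show "sbm_norm \<gamma> (f(0 := 0) - g_lim(0 := 0)) = bm_norm (f - g_lim)"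
      using Cc_inf_borel_measurable_lebesgue[OF f] g_lim_L2 unfolding L2_line_def
      by (simp add: sbm_norm_fun_upd_zero_diff)
    show "eventually (\<lambda>N. sip_norm \<gamma> N (Phi N (f(0 := 0)) - (g N)(0 := 0))
        \<le> rw_norm N (Phi N f - g N)) sequentially"
      using eventually_gt_at_top[of 0]
      by eventually_elim (rule sip_norm_Phi_fun_upd_zero_le[OF f g_l2])
  next
    show "0 \<le> sip_norm \<gamma> N h" for N h
      using assms(1) by (simp add: sip_norm_nonneg)
  qed
  moreover have "l2_grid ((g N)(0 := 0))" for N
    using g_l2 by (rule l2_grid_fun_upd)
  ultimately show ?thesis
    using L2_line_fun_upd[OF g_lim_L2]
    unfolding sip_sbm_conv_def fun_upd_def by simp
qed

end
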